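(* Let $G=(V,E,T,c)$ and $H=(V_H,E_H,T,c_H)$ be $k$-terminal networks with the same terminal set $T$, and let $q\ge1$. Suppose $\mathcal{T}_e(G)=\mathcal{T}_e(H)$ and $$\mathrm{mincut}_G(S)\le \mathrm{mincut}_H(S)\le q\cdot \mathrm{mincut}_G(S)\qquad\text{for all } S\in\mathcal{T}_e(G).$$ Then $\mathrm{mincut}_G(S)\le \mathrm{mincut}_H(S)\le q\cdot\mathrm{mincut}_G(S)$ for every $S\subset T$ with $S\ne\emptyset,T$; that is, $H$ is a cut sparsifier of $G$ of quality $q$.
   Context: A $k$-terminal network $G=(V,E,T,c)$ is a finite connected undirected graph $(V,E)$ with edge weights (capacities) $c:E\to\mathbb{R}_{>0}$ and a set $T\subseteq V$ of $|T|=k$ terminals. For $F\subseteq E$ let $c(F)=\sum_{e\in F}c(e)$; for $W\subseteq V$ let $\delta(W)$ be the set of edges with exactly one endpoint in $W$. For $S\subset T$ with $S\neq\emptyset,T$, write $\bar S=T\setminus S$; a cut $(W,V\setminus W)$ is $S$-separating if $W\cap T\in\{S,\bar S\}$, and $\mathrm{mincut}_G(S)$ is the minimum of $c(\delta(W))$ over all $S$-separating cuts. It is assumed (e.g. by a generic perturbation of the weights) that the minimizing cutset is unique; it is denoted $E_S$ (so $E_S=E_{\bar S}$). For $F\subseteq E$, $CC(F)$ denotes the set of vertex sets of connected components of $(V,E\setminus F)$. The cutset $E_S$ is called elementary if $|CC(E_S)|=2$, and $\mathcal{T}_e(G)=\{S\subset T:\ S\neq\emptyset,T,\ |CC(E_S)|=2\}$.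 The same notions are used for $H$. *)

theory Defs
  imports Complex_Main
begin

definition delta :: "'e set \<Rightarrow> ('e \<Rightarrow> 'v set) \<Rightarrow> 'v set \<Rightarrow> 'e set" where
  "delta E ends W = {e \<in> E. card (ends e \<inter> W) = 1}"

definition adj_rel :: "'e set \<Rightarrow> ('e \<Rightarrow> 'v set) \<Rightarrow> 'e set \<Rightarrow> ('v \<times> 'v) set" where
  "adj_rel E ends F = {(u, v). \<exists>e \<in> E - F. ends e = {u, v}}"

definition CC :: "'v set \<Rightarrow> 'e set \<Rightarrow> ('e \<Rightarrow> 'v set) \<Rightarrow> 'e set \<Rightarrow> 'v set set" where
  "CC V E ends F = {{v \<in> V. (u, v) \<in> (adj_rel E ends F)\<^sup>*} | u. u \<in> V}"

definition terminal_network ::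
  "'v set \<Rightarrow> 'e set \<Rightarrow> ('e \<Rightarrow> 'v set) \<Rightarrow> 'v set \<Rightarrow> ('e \<Rightarrow> real) \<Rightarrow> bool" where
  "terminal_network V E ends T c \<longleftrightarrow>
     finite V \<and> finite E \<and>
     (\<forall>e \<in> E. ends e \<subseteq> V \<and> card (ends e) = 2) \<and>
     (\<forall>u \<in> V. \<forall>v \<in> V. (u, v) \<in> (adj_rel E ends {})\<^sup>*) \<and>
     T \<subseteq> V \<and> (\<forall>e \<in> E. c e > 0)"

definition proper_terminal_subset :: "'v set \<Rightarrow> 'v set \<Rightarrow> bool" where
  "proper_terminal_subset T S \<longleftrightarrow> S \<subseteq> T \<and> S \<noteq> {} \<and> S \<noteq> T"

definition separating :: "'v set \<Rightarrow> 'v set \<Rightarrow> 'v set \<Rightarrow> 'v set \<Rightarrow> bool" where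
  "separating V T S W \<longleftrightarrow> W \<subseteq> V \<and> (W \<inter> T = S \<or> W \<inter> T = T - S)"

definition mincut ::
  "'v set \<Rightarrow> 'e set \<Rightarrow> ('e \<Rightarrow> 'v set) \<Rightarrow> 'v set \<Rightarrow> ('e \<Rightarrow> real) \<Rightarrow> 'v set \<Rightarrow> real" where
  "mincut V E ends T c S =
     Min {sum c (delta E ends W) | W. separating V T S W}"

text \<open>Standing assumption: for each S the minimizing cutset is unique.\<close>
definition unique_mincuts ::
  "'v set \<Rightarrow> 'e set \<Rightarrow> ('e \<Rightarrow> 'v set) \<Rightarrow> 'v set \<Rightarrow> ('e \<Rightarrow> real) \<Rightarrow> bool" where
  "unique_mincuts V E ends T c \<longleftrightarrow>
     (\<forall>S. proper_terminal_subset T S \<longrightarrow>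
        (\<exists>!F. (\<exists>W. separating V T S W \<and> F = delta E ends W) \<and>
              sum c F = mincut V E ends T c S))"

definition min_cutset ::
  "'v set \<Rightarrow> 'e set \<Rightarrow> ('e \<Rightarrow> 'v set) \<Rightarrow> 'v set \<Rightarrow> ('e \<Rightarrow> real) \<Rightarrow> 'v set \<Rightarrow> 'e set" where
  "min_cutset V E ends T c S =
     (THE F. (\<exists>W. separating V T S W \<and> F = delta E ends W) \<and>
             sum c F = mincut V E ends T c S)"

definition elementary_sets ::
  "'v set \<Rightarrow> 'e set \<Rightarrow> ('e \<Rightarrow> 'v set) \<Rightarrow> 'v set \<Rightarrow> ('e \<Rightarrow> real) \<Rightarrow> 'v set set" where
  "elementary_sets V E ends T c =
     {S. proper_terminal_subset T S \<and> card (CC V E ends (min_cutset V E ends T c S)) = 2}"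

end

theory Submission
  imports Defs
begin

text \<open>
  Both inequalities are instances of one implication, applied once as stated and once with
  \<open>G\<close> and \<open>H\<close> exchanged: if \<open>mincut\<^sub>H(S) \<le> a \<cdot> mincut\<^sub>G(S)\<close> for the elementary sets of \<open>G\<close>,
  then for all \<open>S\<close>. This is proved by induction on \<open>|E\<^sub>S|\<close>. Let \<open>E\<^sub>S = \<delta>(X)\<close> be non-elementary
  and fix terminals \<open>t\<^sub>1 \<in> S\<close>, \<open>t\<^sub>2 \<notin> S\<close>. Removing \<open>E\<^sub>S\<close> leaves a component \<open>C\<close> containing
  neither of them, say \<open>C \<subseteq> X\<close>. Every edge leaving \<open>C\<close> lies in \<open>\<delta>(X)\<close>, so \<open>\<delta>(X)\<close> is the
  disjoint union of \<open>\<delta>(C)\<close> and \<open>\<delta>(X - C)\<close>. Optimality of \<open>X\<close> together with subadditivity of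
  min cuts makes \<open>C\<close> and \<open>X - C\<close> optimal cuts for their terminal sets \<open>S\<^sub>A\<close>, \<open>S\<^sub>B\<close>: hence
  \<open>mincut\<^sub>G(S) = mincut\<^sub>G(S\<^sub>A) + mincut\<^sub>G(S\<^sub>B)\<close> with \<open>E\<^sub>S\<^sub>A\<close>, \<open>E\<^sub>S\<^sub>B\<close> strictly smaller than \<open>E\<^sub>S\<close>,
  and subadditivity of \<open>mincut\<^sub>H\<close> completes the induction step.
\<close>

lemma rtrancl_leaves_set:
  assumes "(u, v) \<in> R\<^sup>*" "u \<in> K" "v \<notin> K"
  shows "\<exists>x y. (x, y) \<in> R \<and> x \<in> K \<and> y \<notin> K"
  using assms by (induction rule: rtrancl_induct) blast+

lemma delta_iff:
  assumes "e \<in> E" "ends e = {a, b}" "a \<noteq> b"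
  shows "e \<in> delta E ends X \<longleftrightarrow> (a \<in> X \<longleftrightarrow> b \<notin> X)"
  using assms by (cases "a \<in> X"; cases "b \<in> X") (auto simp: delta_def Int_insert_left)

lemma delta_symdiff_subset:
  assumes "\<And>e. e \<in> E \<Longrightarrow> card (ends e) = 2"
  shows "delta E ends ((X - Y) \<union> (Y - X)) \<subseteq> delta E ends X \<union> delta E ends Y"
proof
  fix e assume e: "e \<in> delta E ends ((X - Y) \<union> (Y - X))"
  then have "e \<in> E" by (simp add: delta_def)
  then obtain a b where "a \<noteq> b" "ends e = {a, b}" using assms by (metis card_2_iff)
  with e \<open>e \<in> E\<close> show "e \<in> delta E ends X \<union> delta E ends Y" by (auto simp: delta_iff)
qed

lemma sym_adj_rel: "sym (adj_rel E ends F)"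
  unfolding adj_rel_def sym_def by (auto simp: insert_commute)

definition component :: "'v set \<Rightarrow> 'e set \<Rightarrow> ('e \<Rightarrow> 'v set) \<Rightarrow> 'e set \<Rightarrow> 'v \<Rightarrow> 'v set" where
  "component V E ends F u = {v \<in> V. (u, v) \<in> (adj_rel E ends F)\<^sup>*}"

lemma CC_eq_image_component: "CC V E ends F = component V E ends F ` V"
  by (auto simp: CC_def component_def)

lemma component_eqI:
  assumes "v \<in> component V E ends F u"
  shows "component V E ends F v = component V E ends F u"
proof -
  have "(u, v) \<in> (adj_rel E ends F)\<^sup>*" using assms by (simp add: component_def)
  moreover from this have "(v, u) \<in> (adj_rel E ends F)\<^sup>*"
    by (rule sym_rtrancl[OF sym_adj_rel, THEN symD])
  ultimately show ?thesis unfolding component_def by (auto intro: rtrancl_trans)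
qed

lemma component_self: "u \<in> V \<Longrightarrow> u \<in> component V E ends F u"
  by (simp add: component_def)

locale terminal_net =
  fixes V :: "'v set" and E :: "'e set" and ends :: "'e \<Rightarrow> 'v set"
    and T :: "'v set" and c :: "'e \<Rightarrow> real"
  assumes network: "terminal_network V E ends T c"
begin

abbreviation "\<delta> X \<equiv> delta E ends X"
abbreviation "cap X \<equiv> sum c (delta E ends X)"
abbreviation "mcut S \<equiv> mincut V E ends T c S"
abbreviation "cmp F u \<equiv> component V E ends F u"

lemma finite_V: "finite V" and finite_E: "finite E" and terminals_subset: "T \<subseteq> V"
  and capacity_pos: "e \<in> E \<Longrightarrow> c e > 0"
  and connected: "u \<in> V \<Longrightarrow> v \<in> V \<Longrightarrow> (u, v) \<in> (adj_rel E ends {})\<^sup>*"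
  and card_ends: "e \<in> E \<Longrightarrow> card (ends e) = 2"
  using network by (auto simp: terminal_network_def)

lemma edge_ends:
  assumes "e \<in> E"
  obtains a b where "a \<noteq> b" "ends e = {a, b}" "a \<in> V" "b \<in> V"
proof -
  have "ends e \<subseteq> V" "card (ends e) = 2" using network assms by (auto simp: terminal_network_def)
  then show ?thesis using that by (auto simp: card_2_iff)
qed

lemma delta_subset: "\<delta> X \<subseteq> E"
  by (auto simp: delta_def)

lemma finite_delta: "finite (\<delta> X)"
  using finite_E delta_subset by (rule finite_subset[rotated])

lemma sum_capacity_nonneg: "F \<subseteq> E \<Longrightarrow> 0 \<le> sum c F"
  using capacity_pos by (intro sum_nonneg) (auto intro: less_imp_le)

lemma sum_capacity_mono: "F \<subseteq> F' \<Longrightarrow> F' \<subseteq> E \<Longrightarrow> sum c F \<le> sum c F'"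
  using finite_E capacity_pos by (intro sum_mono2) (auto intro: finite_subset less_imp_le)

lemma cap_pos: "\<delta> X \<noteq> {} \<Longrightarrow> cap X > 0"
  using finite_delta delta_subset capacity_pos by (intro sum_pos) auto

lemma delta_complement: "\<delta> (V - X) = \<delta> X"
proof (rule set_eqI)
  fix e show "e \<in> \<delta> (V - X) \<longleftrightarrow> e \<in> \<delta> X"
  proof (cases "e \<in> E")
    case True
    then obtain a b where "a \<noteq> b" "ends e = {a, b}" "a \<in> V" "b \<in> V" by (rule edge_ends)
    with True show ?thesis by (auto simp: delta_iff)
  qed (use delta_subset in auto)
qed

lemma delta_nonempty:
  assumes "a \<in> A" "a \<in> V" "b \<in> V" "b \<notin> A"
  shows "\<delta> A \<noteq> {}"
proof -
  obtain x y where xy: "(x, y) \<in> adj_rel E ends {}" "x \<in> A" "y \<notin> A"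
    using rtrancl_leaves_set[OF connected[OF assms(2,3)] assms(1,4)] by blast
  then obtain e where "e \<in> E" "ends e = {x, y}" by (auto simp: adj_rel_def)
  moreover have "x \<noteq> y" using xy by auto
  ultimately have "e \<in> \<delta> A" using xy by (simp add: delta_iff)
  then show ?thesis by auto
qed

lemma delta_Diff:
  assumes "C \<subseteq> X" "\<delta> C \<subseteq> \<delta> X"
  shows "\<delta> (X - C) = \<delta> X - \<delta> C"
proof (rule set_eqI)
  fix e show "e \<in> \<delta> (X - C) \<longleftrightarrow> e \<in> \<delta> X - \<delta> C"
  proof (cases "e \<in> E")
    case True
    then obtain a b where ab: "a \<noteq> b" "ends e = {a, b}" by (rule edge_ends)
    note iff = delta_iff[of e E ends a b, OF True ab(2,1)]
    have "(a \<in> C \<longleftrightarrow> b \<notin> C) \<longrightarrow> (a \<in> X \<longleftrightarrow> b \<notin> X)"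
      using assms(2) unfolding iff[of C, symmetric] iff[of X, symmetric] by blast
    then show ?thesis using assms(1) unfolding Diff_iff iff by auto
  qed (use delta_subset in auto)
qed

lemma cap_Diff:
  assumes "C \<subseteq> X" "\<delta> C \<subseteq> \<delta> X"
  shows "cap X = cap C + cap (X - C)"
  using delta_Diff[OF assms] sum.subset_diff[OF assms(2) finite_delta, of c] by simp

lemma reach_avoiding_delta_same_side:
  assumes "(u, v) \<in> (adj_rel E ends (\<delta> X))\<^sup>*"
  shows "u \<in> X \<longleftrightarrow> v \<in> X"
  using assms
proof (induction rule: rtrancl_induct)
  case (step y z)
  then obtain e where e: "e \<in> E" "e \<notin> \<delta> X" "ends e = {y, z}" by (auto simp: adj_rel_def)
  then have "y \<noteq> z" using card_ends by fastforce
  with e step.IH show ?case by (auto simp: delta_iff)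
qed simp

lemma component_subset_side: "u \<in> X \<Longrightarrow> cmp (\<delta> X) u \<subseteq> X"
  using reach_avoiding_delta_same_side by (auto simp: component_def)

lemma delta_component_subset: "\<delta> (cmp F u) \<subseteq> F"
proof
  fix e assume e: "e \<in> \<delta> (cmp F u)"
  then have "e \<in> E" using delta_subset by auto
  then obtain a b where ab: "a \<noteq> b" "ends e = {a, b}" "a \<in> V" "b \<in> V" by (rule edge_ends)
  show "e \<in> F"
  proof (rule ccontr)
    assume "e \<notin> F"
    then have "(a, b) \<in> adj_rel E ends F" "(b, a) \<in> adj_rel E ends F"
      using \<open>e \<in> E\<close> ab(2) by (auto simp: adj_rel_def insert_commute)
    then have "a \<in> cmp F u \<longleftrightarrow> b \<in> cmp F u"
      using ab(3,4) by (auto simp: component_def intro: rtrancl_into_rtrancl)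
    with e \<open>e \<in> E\<close> ab(1,2) show False by (simp add: delta_iff)
  qed
qed

lemma finite_cut_values: "finite {cap W | W. separating V T S W}"
proof -
  have "{cap W | W. separating V T S W} = cap ` {W. separating V T S W}" by auto
  moreover have "{W. separating V T S W} \<subseteq> Pow V" by (auto simp: separating_def)
  ultimately show ?thesis using finite_V by (metis finite_Pow_iff finite_imageI finite_subset)
qed

lemma mincut_le: "separating V T S W \<Longrightarrow> mcut S \<le> cap W"
  unfolding mincut_def by (rule Min_le[OF finite_cut_values]) auto

lemma mincut_attained:
  assumes "S \<subseteq> T"
  obtains W where "separating V T S W" "cap W = mcut S"
proof -
  have "separating V T S S" using assms terminals_subset by (auto simp: separating_def)
  then have "{cap W | W. separating V T S W} \<noteq> {}" by auto
  from Min_in[OF finite_cut_values this] show ?thesis using that unfolding mincut_def by auto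
qed

lemma separating_complement: "S \<subseteq> T \<Longrightarrow> separating V T (T - S) W = separating V T S W"
  by (auto simp: separating_def)

lemma mincut_complement: "S \<subseteq> T \<Longrightarrow> mcut (T - S) = mcut S"
  by (simp add: mincut_def separating_complement)

lemma mincut_subadditive:
  assumes "S1 \<subseteq> T" "S2 \<subseteq> T" "S1 \<inter> S2 = {}"
  shows "mcut (S1 \<union> S2) \<le> mcut S1 + mcut S2"
proof -
  obtain W1 where W1: "separating V T S1 W1" "cap W1 = mcut S1"
    using assms(1) by (rule mincut_attained)
  obtain W2 where W2: "separating V T S2 W2" "cap W2 = mcut S2"
    using assms(2) by (rule mincut_attained)
  define W where "W = (W1 - W2) \<union> (W2 - W1)"
  have T1: "W1 \<inter> T = S1 \<or> W1 \<inter> T = T - S1" and V1: "W1 \<subseteq> V"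
    using W1(1) by (auto simp: separating_def)
  have T2: "W2 \<inter> T = S2 \<or> W2 \<inter> T = T - S2" and V2: "W2 \<subseteq> V"
    using W2(1) by (auto simp: separating_def)
  have WT: "W \<inter> T = (W1 \<inter> T - W2 \<inter> T) \<union> (W2 \<inter> T - W1 \<inter> T)" by (auto simp: W_def)
  have "W \<inter> T = S1 \<union> S2 \<or> W \<inter> T = T - (S1 \<union> S2)"
    using T1 T2 assms unfolding WT by blast
  then have "separating V T (S1 \<union> S2) W"
    using V1 V2 unfolding separating_def W_def by blast
  then have "mcut (S1 \<union> S2) \<le> cap W" by (rule mincut_le)
  also have "\<dots> \<le> sum c (\<delta> W1 \<union> \<delta> W2)"
  proof (rule sum_capacity_mono)
    show "\<delta> W \<subseteq> \<delta> W1 \<union> \<delta> W2" unfolding W_def by (rule delta_symdiff_subset) (rule card_ends)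
  qed (use delta_subset in blast)
  also have "\<dots> \<le> cap W1 + cap W2"
    using sum_capacity_nonneg[of "\<delta> W1 \<inter> \<delta> W2"] delta_subset[of W1]
    by (simp add: sum_Un finite_delta le_infI1)
  finally show ?thesis using W1 W2 by simp
qed

lemma optimal_cut_component_meets_terminals:
  assumes sep: "separating V T S X" and opt: "cap X = mcut S"
    and u: "u \<in> X" and t': "t' \<in> T" "t' \<notin> X"
  shows "cmp (\<delta> X) u \<inter> T \<noteq> {}"
proof
  let ?C = "cmp (\<delta> X) u"
  assume CT: "?C \<inter> T = {}"
  have CX: "?C \<subseteq> X" "\<delta> ?C \<subseteq> \<delta> X"
    using component_subset_side[OF u] delta_component_subset by auto
  have uV: "u \<in> V" and t'V: "t' \<in> V"
    using sep u t'(1) terminals_subset by (auto simp: separating_def)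
  have "t' \<notin> ?C" using t'(2) CX(1) by blast
  then have "\<delta> ?C \<noteq> {}" by (rule delta_nonempty[OF component_self[OF uV] uV t'V])
  have "separating V T S (X - ?C)" using sep CT unfolding separating_def by blast
  then have "mcut S \<le> cap (X - ?C)" by (rule mincut_le)
  also have "\<dots> = cap X - cap ?C" using cap_Diff[OF CX] by simp
  also have "\<dots> < cap X" using cap_pos[OF \<open>\<delta> ?C \<noteq> {}\<close>] by simp
  finally show False using opt by simp
qed

lemma optimal_cut_split:
  assumes ST: "S \<subseteq> T" and sep: "separating V T S X" and opt: "cap X = mcut S"
    and CX: "C \<subseteq> X" "\<delta> C \<subseteq> \<delta> X"
  shows "mcut (C \<inter> T) = cap C" "mcut ((X - C) \<inter> T) = cap (X - C)"
    "cap X = cap C + cap (X - C)"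
proof -
  have XV: "X \<subseteq> V" using sep by (simp add: separating_def)
  show split: "cap X = cap C + cap (X - C)" by (rule cap_Diff[OF CX])
  have "mcut S = mcut (X \<inter> T)"
    using sep ST by (auto simp: separating_def mincut_complement)
  also have "X \<inter> T = C \<inter> T \<union> (X - C) \<inter> T" using CX by blast
  finally have "mcut S \<le> mcut (C \<inter> T) + mcut ((X - C) \<inter> T)"
    using mincut_subadditive[of "C \<inter> T" "(X - C) \<inter> T"] by auto
  moreover have "mcut (C \<inter> T) \<le> cap C" "mcut ((X - C) \<inter> T) \<le> cap (X - C)"
    using CX XV by (auto intro!: mincut_le simp: separating_def)
  ultimately show "mcut (C \<inter> T) = cap C" "mcut ((X - C) \<inter> T) = cap (X - C)"
    using opt split by linarith+
qed

end

locale terminal_net_unique = terminal_net +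
  assumes unique: "unique_mincuts V E ends T c"
begin

abbreviation "E\<^sub>S S \<equiv> min_cutset V E ends T c S"

lemma min_cutset_unique:
  assumes "proper_terminal_subset T S"
  shows "\<exists>!F. (\<exists>W. separating V T S W \<and> F = \<delta> W) \<and> sum c F = mcut S"
  using unique assms by (simp add: unique_mincuts_def)

lemma min_cutset_attained:
  assumes "proper_terminal_subset T S"
  obtains W where "separating V T S W" "E\<^sub>S S = \<delta> W" "cap W = mcut S"
  using theI'[OF min_cutset_unique[OF assms]] that unfolding min_cutset_def by auto

lemma min_cutset_eqI:
  assumes "proper_terminal_subset T S" "separating V T S W" "cap W = mcut S"
  shows "E\<^sub>S S = \<delta> W"
  using the1_equality[OF min_cutset_unique[OF assms(1)], of "\<delta> W"] assms
  unfolding min_cutset_def by auto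

text \<open>\<open>u\<close> lies in a third component of \<open>(V, E - E\<^sub>S)\<close>, besides those of a terminal in \<open>S\<close>
  and one in \<open>T - S\<close>; \<open>X\<close> is the side of the cut containing it.\<close>

lemma nonelementary_third_component:
  assumes pS: "proper_terminal_subset T S" and ne: "S \<notin> elementary_sets V E ends T c"
  obtains X u t t' where "separating V T S X" "E\<^sub>S S = \<delta> X" "cap X = mcut S"
    "u \<in> X" "t \<in> X" "t \<in> T" "t \<notin> cmp (\<delta> X) u" "t' \<in> T" "t' \<notin> X"
proof -
  obtain W where W: "separating V T S W" "E\<^sub>S S = \<delta> W" "cap W = mcut S"
    using pS by (rule min_cutset_attained)
  have WV: "W \<subseteq> V" using W(1) by (simp add: separating_def)
  obtain t1 t2 where t: "t1 \<in> T" "t2 \<in> T" "t1 \<in> W \<longleftrightarrow> t2 \<notin> W"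
  proof -
    obtain t1 t2 where t: "t1 \<in> S" "t2 \<in> T" "t2 \<notin> S"
      using pS by (auto simp: proper_terminal_subset_def)
    moreover have "t1 \<in> W \<longleftrightarrow> t2 \<notin> W"
      using t W(1) pS by (auto simp: separating_def proper_terminal_subset_def)
    ultimately show thesis using that[of t1 t2] pS by (auto simp: proper_terminal_subset_def)
  qed
  have tV: "t1 \<in> V" "t2 \<in> V" using t terminals_subset by auto
  have "t2 \<notin> cmp (\<delta> W) t1"
    using reach_avoiding_delta_same_side t(3) by (auto simp: component_def)
  then have distinct: "cmp (\<delta> W) t1 \<noteq> cmp (\<delta> W) t2" using component_self[OF tV(2)] by auto
  obtain u where u: "u \<in> V" "cmp (\<delta> W) u \<noteq> cmp (\<delta> W) t1" "cmp (\<delta> W) u \<noteq> cmp (\<delta> W) t2"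
  proof (rule ccontr)
    assume "\<not> thesis"
    then have "\<forall>u \<in> V. cmp (\<delta> W) u = cmp (\<delta> W) t1 \<or> cmp (\<delta> W) u = cmp (\<delta> W) t2"
      using that by meson
    with tV have "cmp (\<delta> W) ` V = {cmp (\<delta> W) t1, cmp (\<delta> W) t2}" by auto
    with distinct ne pS W(2) show False
      by (simp add: elementary_sets_def CC_eq_image_component)
  qed
  define X where "X = (if u \<in> W then W else V - W)"
  define t where "t = (if t1 \<in> X then t1 else t2)"
  define t' where "t' = (if t1 \<in> X then t2 else t1)"
  have "\<delta> X = \<delta> W" by (simp add: X_def delta_complement)
  moreover have "separating V T S X"
    using W(1) terminals_subset pS unfolding X_def separating_def proper_terminal_subset_def by auto
  moreover have "t \<notin> cmp (\<delta> X) u"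
    using u component_eqI unfolding t_def \<open>\<delta> X = \<delta> W\<close> by metis
  moreover have "u \<in> X" "t \<in> X" "t' \<notin> X" using u(1) t tV WV by (auto simp: X_def t_def t'_def)
  moreover have "t \<in> T" "t' \<in> T" using t by (simp_all add: t_def t'_def)
  ultimately show ?thesis using W(2,3) by (intro that[of X u t t']) simp_all
qed

lemma nonelementary_split:
  assumes pS: "proper_terminal_subset T S" and ne: "S \<notin> elementary_sets V E ends T c"
  obtains SA SB where "proper_terminal_subset T SA" "proper_terminal_subset T SB"
    "SA \<inter> SB = {}" "SA \<union> SB = S \<or> SA \<union> SB = T - S" "mcut S = mcut SA + mcut SB"
    "card (E\<^sub>S SA) < card (E\<^sub>S S)" "card (E\<^sub>S SB) < card (E\<^sub>S S)"
proof -
  obtain X u t t' where sep: "separating V T S X" and ES: "E\<^sub>S S = \<delta> X"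
    and opt: "cap X = mcut S" and u: "u \<in> X"
    and t: "t \<in> X" "t \<in> T" "t \<notin> cmp (\<delta> X) u" and t': "t' \<in> T" "t' \<notin> X"
    using assms by (rule nonelementary_third_component)
  define C where "C = cmp (\<delta> X) u"
  define SA where "SA = C \<inter> T"
  define SB where "SB = (X - C) \<inter> T"
  have ST: "S \<subseteq> T" using pS by (simp add: proper_terminal_subset_def)
  have XV: "X \<subseteq> V" using sep by (simp add: separating_def)
  have CX: "C \<subseteq> X" "\<delta> C \<subseteq> \<delta> X"
    unfolding C_def using component_subset_side[OF u] delta_component_subset by auto
  note parts = optimal_cut_split[OF ST sep opt CX, folded SA_def SB_def]
  have pA: "proper_terminal_subset T SA"
    using optimal_cut_component_meets_terminals[OF sep opt u t'] t CX
    by (auto simp: SA_def C_def proper_terminal_subset_def)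
  have pB: "proper_terminal_subset T SB"
    using t t' C_def by (auto simp: SB_def proper_terminal_subset_def)
  have "separating V T SA C" "separating V T SB (X - C)"
    using CX XV by (auto simp: SA_def SB_def separating_def)
  then have "E\<^sub>S SA = \<delta> C" "E\<^sub>S SB = \<delta> (X - C)"
    using min_cutset_eqI[OF pA] min_cutset_eqI[OF pB] parts by simp_all
  moreover have "\<delta> C \<noteq> {}" "\<delta> (X - C) \<noteq> {}"
  proof -
    have "u \<in> V" "t \<in> V" "t' \<in> V" using u t t' XV terminals_subset by auto
    then show "\<delta> C \<noteq> {}" "\<delta> (X - C) \<noteq> {}"
      using t t' CX(1) delta_nonempty[of u C t'] delta_nonempty[of t "X - C" t']
      by (auto simp: C_def component_self)
  qed
  ultimately have "card (E\<^sub>S SA) < card (E\<^sub>S S)" "card (E\<^sub>S SB) < card (E\<^sub>S S)"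
    unfolding ES using CX delta_Diff[OF CX] by (auto intro!: psubset_card_mono finite_delta)
  moreover have "SA \<inter> SB = {}" by (auto simp: SA_def SB_def)
  moreover have "SA \<union> SB = S \<or> SA \<union> SB = T - S"
    using sep CX(1) by (auto simp: SA_def SB_def separating_def)
  ultimately show ?thesis using that pA pB parts opt by simp
qed

end

lemma mincut_bound_from_elementary:
  fixes V :: "'v set" and E :: "'e set" and ends :: "'e \<Rightarrow> 'v set" and c :: "'e \<Rightarrow> real"
    and V' :: "'v set" and E' :: "'f set" and ends' :: "'f \<Rightarrow> 'v set" and c' :: "'f \<Rightarrow> real"
  assumes G: "terminal_net_unique V E ends T c" and H: "terminal_net V' E' ends' T c'"
    and elem: "\<And>S. S \<in> elementary_sets V E ends T c \<Longrightarrow>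
       mincut V' E' ends' T c' S \<le> a * mincut V E ends T c S"
    and S: "proper_terminal_subset T S"
  shows "mincut V' E' ends' T c' S \<le> a * mincut V E ends T c S"
  using S
proof (induction "card (min_cutset V E ends T c S)" arbitrary: S rule: less_induct)
  case less
  show ?case
  proof (cases "S \<in> elementary_sets V E ends T c")
    case False
    with less.prems obtain SA SB where
      parts: "proper_terminal_subset T SA" "proper_terminal_subset T SB" "SA \<inter> SB = {}"
        "SA \<union> SB = S \<or> SA \<union> SB = T - S"
        "mincut V E ends T c S = mincut V E ends T c SA + mincut V E ends T c SB"
        and smaller: "card (min_cutset V E ends T c SA) < card (min_cutset V E ends T c S)"
          "card (min_cutset V E ends T c SB) < card (min_cutset V E ends T c S)"
      by (rule terminal_net_unique.nonelementary_split[OF G])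
    have T: "S \<subseteq> T" "SA \<subseteq> T" "SB \<subseteq> T"
      using less.prems parts by (auto simp: proper_terminal_subset_def)
    have "mincut V' E' ends' T c' S = mincut V' E' ends' T c' (SA \<union> SB)"
      using parts(4) T(1) terminal_net.mincut_complement[OF H] by auto
    also have "\<dots> \<le> mincut V' E' ends' T c' SA + mincut V' E' ends' T c' SB"
      using terminal_net.mincut_subadditive[OF H T(2,3) parts(3)] .
    also have "\<dots> \<le> a * mincut V E ends T c SA + a * mincut V E ends T c SB"
      using less.hyps[OF smaller(1) parts(1)] less.hyps[OF smaller(2) parts(2)] by linarith
    also have "\<dots> = a * mincut V E ends T c S" using parts(5) by (simp add: algebra_simps)
    finally show ?thesis .
  qed (use elem in blast)
qed

theorem theorem2p6:
  fixes V :: "'v set" and E :: "'e set" and ends :: "'e \<Rightarrow> 'v set" and c :: "'e \<Rightarrow> real"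
    and VH :: "'v set" and EH :: "'f set" and endsH :: "'f \<Rightarrow> 'v set" and cH :: "'f \<Rightarrow> real"
    and T :: "'v set" and q :: real
  assumes G: "terminal_network V E ends T c" and uG: "unique_mincuts V E ends T c"
    and H: "terminal_network VH EH endsH T cH" and uH: "unique_mincuts VH EH endsH T cH"
    and q: "q \<ge> 1"
    and Te: "elementary_sets V E ends T c = elementary_sets VH EH endsH T cH"
    and elem: "\<And>S. S \<in> elementary_sets V E ends T c \<Longrightarrow>
        mincut V E ends T c S \<le> mincut VH EH endsH T cH S \<and>
        mincut VH EH endsH T cH S \<le> q * mincut V E ends T c S"
  shows "\<forall>S. proper_terminal_subset T S \<longrightarrow>
        mincut V E ends T c S \<le> mincut VH EH endsH T cH S \<and>
        mincut VH EH endsH T cH S \<le> q * mincut V E ends T c S"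
proof (intro allI impI conjI)
  fix S assume S: "proper_terminal_subset T S"
  have netG: "terminal_net_unique V E ends T c" and netH: "terminal_net_unique VH EH endsH T cH"
    using G uG H uH by (simp_all add: terminal_net_unique_def terminal_net_unique_axioms_def terminal_net_def)
  show "mincut VH EH endsH T cH S \<le> q * mincut V E ends T c S"
    using mincut_bound_from_elementary[OF netG terminal_net.intro[OF H] _ S] elem by blast
  have "mincut V E ends T c S \<le> 1 * mincut VH EH endsH T cH S"
    using mincut_bound_from_elementary[OF netH terminal_net.intro[OF G], of 1, OF _ S] elem Te by auto
  then show "mincut V E ends T c S \<le> mincut VH EH endsH T cH S" by simp
qed

end
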